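(* Let $(\Omega,\mathcal{F},\mathbb{P})$ be a probability space, let $N\in\mathbb{N}$, $\alpha\in\mathbb{R}$, $\varepsilon\in(0,1)$, $\delta\in(0,\varepsilon)$, let $X_1,\dots,X_N\colon\Omega\to(0,\infty)$ be random variables, and assume for all $i\in\{1,\dots,N\}$, $x\in(0,\infty)$ that $\mathbb{P}(N^\alpha X_i\le x)=[\tfrac2\pi]^{1/2}\int_0^x\exp(-\tfrac{y^2}{2})\,\mathrm{d}y$. Then $$\mathbb{P}\big(\max\{X_1,\dots,X_N\}\ge N^{-\alpha+\varepsilon}\big)\le(\varepsilon-\delta)^{-1}N^{-\delta}.$$ *)

theory Defs
  imports "HOL-Probability.Probability"
begin

end

theory Submission
  imports Defs
begin

text \<open>
  By the union bound the probability is at most \<open>N\<close> times the half-normal tail at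
  \<open>c = N powr \<epsilon>\<close>, and comparing the density with \<open>y/c\<close> times itself gives the Mills-ratio
  bound \<open>exp (-c\<^sup>2/2) / c\<close> for that tail. If \<open>(\<epsilon> - \<delta>) N powr \<delta> \<le> 1\<close> the claimed bound is
  at least 1 and there is nothing to prove. Otherwise \<open>\<epsilon> c > 1\<close>, so
  \<open>\<epsilon> ln N = ln c \<le> c/2 < \<epsilon> c\<^sup>2/2\<close>, i.e. \<open>N \<le> exp (c\<^sup>2/2)\<close>, and the union bound is at most
  \<open>1/c = N powr -\<epsilon> \<le> N powr -\<delta>\<close>.
\<close>

lemma gaussian_integral_tail_le:
  fixes x R :: real
  assumes "0 < x" and "x \<le> R"
  shows "integral {x..R} (\<lambda>y. exp (- (y ^ 2) / 2)) \<le> exp (- (x ^ 2) / 2) / x"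
proof -
  have antiderivative: "((\<lambda>y. y / x * exp (- (y ^ 2) / 2))
      has_integral (exp (- (x ^ 2) / 2) / x - exp (- (R ^ 2) / 2) / x)) {x..R}"
  proof -
    have "((\<lambda>y. - exp (- (y ^ 2) / 2) / x) has_real_derivative y / x * exp (- (y ^ 2) / 2))
        (at y within {x..R})" for y
      using \<open>0 < x\<close> by (auto intro!: derivative_eq_intros simp: field_simps power2_eq_square)
    then show ?thesis
      using fundamental_theorem_of_calculus[OF \<open>x \<le> R\<close>, of "\<lambda>y. - exp (- (y ^ 2) / 2) / x"]
      by (simp add: has_real_derivative_iff_has_vector_derivative)
  qed
  have "integral {x..R} (\<lambda>y. exp (- (y ^ 2) / 2)) \<le> integral {x..R} (\<lambda>y. y / x * exp (- (y ^ 2) / 2))"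
  proof (rule integral_le)
    show "(\<lambda>y. exp (- (y ^ 2) / 2)) integrable_on {x..R}"
      by (intro integrable_continuous_interval continuous_intros) simp
    show "(\<lambda>y. y / x * exp (- (y ^ 2) / 2)) integrable_on {x..R}"
      using antiderivative by blast
    show "exp (- (y ^ 2) / 2) \<le> y / x * exp (- (y ^ 2) / 2)" if "y \<in> {x..R}" for y
      using that \<open>0 < x\<close> mult_right_mono[of 1 "y / x" "exp (- (y ^ 2) / 2)"] by simp
  qed
  also have "\<dots> = exp (- (x ^ 2) / 2) / x - exp (- (R ^ 2) / 2) / x"
    using antiderivative by (rule integral_unique)
  also have "\<dots> \<le> exp (- (x ^ 2) / 2) / x"
    using \<open>0 < x\<close> by simp
  finally show ?thesis .
qed

lemma (in prob_space) prob_le_tendsto_one: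
  fixes Y :: "'a \<Rightarrow> real"
  assumes "Y \<in> borel_measurable M"
  shows "((\<lambda>x. prob {\<omega> \<in> space M. Y \<omega> \<le> x}) \<longlongrightarrow> 1) at_top"
proof -
  have "cdf (distr M borel Y) = (\<lambda>x. prob {\<omega> \<in> space M. Y \<omega> \<le> x})"
    using assms by (auto simp: cdf_def measure_distr vimage_def Int_def conj_commute)
  with real_distribution.cdf_lim_at_top_prob[OF real_distribution_distr[OF assms]]
  show ?thesis by simp
qed

lemma (in prob_space) half_normal_prob_gt_le:
  fixes Y :: "'a \<Rightarrow> real"
  assumes Y: "Y \<in> borel_measurable M" and "0 < x"
    and cdf: "\<And>x. x > 0 \<Longrightarrow> prob {\<omega> \<in> space M. Y \<omega> \<le> x}
                = sqrt (2 / pi) * integral {0..x} (\<lambda>y. exp (- (y ^ 2) / 2))"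
  shows "prob {\<omega> \<in> space M. Y \<omega> > x} \<le> sqrt (2 / pi) * (exp (- (x ^ 2) / 2) / x)"
proof -
  have "{\<omega> \<in> space M. Y \<omega> > x} = space M - {\<omega> \<in> space M. Y \<omega> \<le> x}"
    by auto
  then have "prob {\<omega> \<in> space M. Y \<omega> > x} = 1 - prob {\<omega> \<in> space M. Y \<omega> \<le> x}"
    using prob_compl[of "{\<omega> \<in> space M. Y \<omega> \<le> x}"] Y by simp
  also have "\<dots> \<le> sqrt (2 / pi) * (exp (- (x ^ 2) / 2) / x)"
  proof (rule tendsto_upperbound)
    show "((\<lambda>R. prob {\<omega> \<in> space M. Y \<omega> \<le> R} - prob {\<omega> \<in> space M. Y \<omega> \<le> x}) \<longlongrightarrow>
        1 - prob {\<omega> \<in> space M. Y \<omega> \<le> x}) at_top"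
      by (intro tendsto_diff prob_le_tendsto_one Y tendsto_const)
    have "prob {\<omega> \<in> space M. Y \<omega> \<le> R} - prob {\<omega> \<in> space M. Y \<omega> \<le> x}
        \<le> sqrt (2 / pi) * (exp (- (x ^ 2) / 2) / x)" if "x \<le> R" for R
    proof -
      have "integral {0..x} (\<lambda>y. exp (- (y ^ 2) / 2)) + integral {x..R} (\<lambda>y. exp (- (y ^ 2) / 2))
          = integral {0..R} (\<lambda>y. exp (- (y ^ 2) / 2))"
        using \<open>0 < x\<close> \<open>x \<le> R\<close>
        by (intro Henstock_Kurzweil_Integration.integral_combine integrable_continuous_interval
            continuous_intros) auto
      then have "prob {\<omega> \<in> space M. Y \<omega> \<le> R} - prob {\<omega> \<in> space M. Y \<omega> \<le> x}
          = sqrt (2 / pi) * integral {x..R} (\<lambda>y. exp (- (y ^ 2) / 2))"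
        using \<open>0 < x\<close> \<open>x \<le> R\<close> by (simp add: cdf algebra_simps flip: distrib_left)
      also have "\<dots> \<le> sqrt (2 / pi) * (exp (- (x ^ 2) / 2) / x)"
        using gaussian_integral_tail_le[OF \<open>0 < x\<close> \<open>x \<le> R\<close>] by (rule mult_left_mono) simp
      finally show ?thesis .
    qed
    then show "\<forall>\<^sub>F R in at_top. prob {\<omega> \<in> space M. Y \<omega> \<le> R} - prob {\<omega> \<in> space M. Y \<omega> \<le> x}
        \<le> sqrt (2 / pi) * (exp (- (x ^ 2) / 2) / x)"
      unfolding eventually_at_top_linorder by blast
  qed simp
  finally show ?thesis .
qed

lemma (in prob_space) half_normal_prob_ge_le:
  fixes Y :: "'a \<Rightarrow> real"
  assumes Y: "Y \<in> borel_measurable M" and "0 < c"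
    and cdf: "\<And>x. x > 0 \<Longrightarrow> prob {\<omega> \<in> space M. Y \<omega> \<le> x}
                = sqrt (2 / pi) * integral {0..x} (\<lambda>y. exp (- (y ^ 2) / 2))"
  shows "prob {\<omega> \<in> space M. Y \<omega> \<ge> c} \<le> sqrt (2 / pi) * (exp (- (c ^ 2) / 2) / c)"
proof (rule tendsto_lowerbound)
  show "((\<lambda>x. sqrt (2 / pi) * (exp (- (x ^ 2) / 2) / x)) \<longlongrightarrow>
      sqrt (2 / pi) * (exp (- (c ^ 2) / 2) / c)) (at_left c)"
    using \<open>0 < c\<close> by (intro tendsto_intros) auto
  have "prob {\<omega> \<in> space M. Y \<omega> \<ge> c} \<le> sqrt (2 / pi) * (exp (- (x ^ 2) / 2) / x)"
    if "0 < x" "x < c" for x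
  proof -
    have "prob {\<omega> \<in> space M. Y \<omega> \<ge> c} \<le> prob {\<omega> \<in> space M. Y \<omega> > x}"
      using \<open>x < c\<close> Y by (intro finite_measure_mono) auto
    also have "\<dots> \<le> sqrt (2 / pi) * (exp (- (x ^ 2) / 2) / x)"
      using half_normal_prob_gt_le[OF Y \<open>0 < x\<close> cdf] .
    finally show ?thesis .
  qed
  then show "\<forall>\<^sub>F x in at_left c. prob {\<omega> \<in> space M. Y \<omega> \<ge> c}
      \<le> sqrt (2 / pi) * (exp (- (x ^ 2) / 2) / x)"
    unfolding eventually_at_left_field using \<open>0 < c\<close> by blast
qed simp

lemma (in prob_space) prob_Max_ge_le_sum:
  fixes X :: "'i \<Rightarrow> 'a \<Rightarrow> real"
  assumes "finite I" and "I \<noteq> {}" and "\<And>i. i \<in> I \<Longrightarrow> X i \<in> borel_measurable M"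
  shows "prob {\<omega> \<in> space M. Max ((\<lambda>i. X i \<omega>) ` I) \<ge> t}
    \<le> (\<Sum>i\<in>I. prob {\<omega> \<in> space M. X i \<omega> \<ge> t})"
proof -
  have "{\<omega> \<in> space M. Max ((\<lambda>i. X i \<omega>) ` I) \<ge> t} = (\<Union>i\<in>I. {\<omega> \<in> space M. X i \<omega> \<ge> t})"
    using assms(1,2) by (auto simp: Max_ge_iff)
  moreover have "(\<lambda>i. {\<omega> \<in> space M. X i \<omega> \<ge> t}) ` I \<subseteq> events"
    using assms(3) by auto
  ultimately show ?thesis
    using finite_measure_subadditive_finite[OF assms(1)] by simp
qed

lemma ln_le_half:
  fixes c :: real
  assumes "0 < c"
  shows "ln c \<le> c / 2"
proof -
  have "ln c = 2 * ln (sqrt c)"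
    using assms by (simp add: ln_sqrt)
  also have "\<dots> \<le> 2 * (sqrt c - 1)"
    using ln_le_minus_one[of "sqrt c"] assms by simp
  also have "\<dots> \<le> c / 2"
    using assms zero_le_power2[of "sqrt c - 2"] by (simp add: power2_diff)
  finally show ?thesis .
qed

lemma le_exp_half_square_powr:
  fixes n \<epsilon> :: real
  assumes "1 \<le> n" and "0 < \<epsilon>" and "1 < \<epsilon> * n powr \<epsilon>"
  shows "n \<le> exp ((n powr \<epsilon>) ^ 2 / 2)"
proof -
  define c where "c = n powr \<epsilon>"
  have "0 < c"
    using assms(1) by (simp add: c_def)
  have "\<epsilon> * ln n = ln c"
    using assms(1) by (simp add: c_def)
  also have "\<dots> \<le> c / 2"
    using \<open>0 < c\<close> by (rule ln_le_half)
  also have "\<dots> \<le> \<epsilon> * (c ^ 2 / 2)"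
    using assms(3) \<open>0 < c\<close> mult_right_mono[of 1 "\<epsilon> * c" c]
    by (simp add: c_def power2_eq_square algebra_simps)
  finally have "ln n \<le> c ^ 2 / 2"
    using \<open>0 < \<epsilon>\<close> by simp
  then show ?thesis
    using assms(1) by (subst ln_le_cancel_iff[symmetric]) (auto simp: c_def)
qed

lemma min_one_union_gaussian_tail_le:
  fixes n \<epsilon> \<delta> :: real
  assumes "1 \<le> n" and "0 < \<delta>" and "\<delta> < \<epsilon>" and "\<epsilon> < 1"
  shows "min 1 (n * (exp (- ((n powr \<epsilon>) ^ 2) / 2) / n powr \<epsilon>)) \<le> inverse (\<epsilon> - \<delta>) * n powr (- \<delta>)"
proof (cases "(\<epsilon> - \<delta>) * n powr \<delta> \<le> 1")
  case True
  have "1 \<le> inverse ((\<epsilon> - \<delta>) * n powr \<delta>)"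
    using True assms by (intro one_le_inverse) auto
  also have "\<dots> = inverse (\<epsilon> - \<delta>) * n powr (- \<delta>)"
    using assms(1) by (simp add: powr_minus)
  finally show ?thesis
    by simp
next
  case False
  have "(\<epsilon> - \<delta>) * n powr \<delta> \<le> \<epsilon> * n powr \<epsilon>"
    using assms by (intro mult_mono powr_mono) auto
  then have "n \<le> exp ((n powr \<epsilon>) ^ 2 / 2)"
    using False assms by (intro le_exp_half_square_powr) auto
  then have "n * (exp (- ((n powr \<epsilon>) ^ 2) / 2) / n powr \<epsilon>) \<le> n powr (- \<epsilon>)"
    using assms(1) by (simp add: exp_minus powr_minus field_simps)
  also have "\<dots> \<le> n powr (- \<delta>)"
    using assms by (intro powr_mono) auto
  also have "\<dots> \<le> inverse (\<epsilon> - \<delta>) * n powr (- \<delta>)"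
    using assms mult_right_mono[of 1 "inverse (\<epsilon> - \<delta>)" "n powr (- \<delta>)"] by (simp add: one_le_inverse)
  finally show ?thesis
    by simp
qed

theorem lemma2p34:
  fixes M :: "'a measure" and N :: nat and \<alpha> \<epsilon> \<delta> :: real
    and X :: "nat \<Rightarrow> 'a \<Rightarrow> real"
  assumes "prob_space M"
    and "N \<ge> 1"
    and "0 < \<epsilon>" and "\<epsilon> < 1"
    and "0 < \<delta>" and "\<delta> < \<epsilon>"
    and "\<And>i. i \<in> {1..N} \<Longrightarrow> X i \<in> borel_measurable M"
    and "\<And>i \<omega>. i \<in> {1..N} \<Longrightarrow> \<omega> \<in> space M \<Longrightarrow> X i \<omega> > 0"
    and "\<And>i x. i \<in> {1..N} \<Longrightarrow> x > 0 \<Longrightarrow>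
          measure M {\<omega> \<in> space M. real N powr \<alpha> * X i \<omega> \<le> x}
            = sqrt (2 / pi) * integral {0..x} (\<lambda>y. exp (- (y ^ 2) / 2))"
  shows "measure M {\<omega> \<in> space M. Max ((\<lambda>i. X i \<omega>) ` {1..N}) \<ge> real N powr (- \<alpha> + \<epsilon>)}
           \<le> inverse (\<epsilon> - \<delta>) * real N powr (- \<delta>)"
proof -
  interpret prob_space M by (rule assms(1))
  define c where "c = real N powr \<epsilon>"
  have "0 < c" and c_eq: "c = real N powr \<alpha> * real N powr (- \<alpha> + \<epsilon>)"
    using assms(2) by (simp_all add: c_def flip: powr_add)
  have tail: "prob {\<omega> \<in> space M. X i \<omega> \<ge> real N powr (- \<alpha> + \<epsilon>)} \<le> exp (- (c ^ 2) / 2) / c"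
    if i: "i \<in> {1..N}" for i
  proof -
    have "{\<omega> \<in> space M. X i \<omega> \<ge> real N powr (- \<alpha> + \<epsilon>)}
        = {\<omega> \<in> space M. real N powr \<alpha> * X i \<omega> \<ge> c}"
      using assms(2) by (simp add: c_eq mult_le_cancel_left_pos)
    also have "prob \<dots> \<le> sqrt (2 / pi) * (exp (- (c ^ 2) / 2) / c)"
      using assms(7)[OF i] by (intro half_normal_prob_ge_le \<open>0 < c\<close> assms(9)[OF i]) simp
    also have "\<dots> \<le> exp (- (c ^ 2) / 2) / c"
      using pi_gt3 \<open>0 < c\<close> mult_right_mono[of "sqrt (2 / pi)" 1 "exp (- (c ^ 2) / 2) / c"]
      by simp
    finally show ?thesis .
  qed
  have "prob {\<omega> \<in> space M. Max ((\<lambda>i. X i \<omega>) ` {1..N}) \<ge> real N powr (- \<alpha> + \<epsilon>)}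
      \<le> (\<Sum>i\<in>{1..N}. prob {\<omega> \<in> space M. X i \<omega> \<ge> real N powr (- \<alpha> + \<epsilon>)})"
    using assms(2,7) by (intro prob_Max_ge_le_sum) auto
  also have "\<dots> \<le> real N * (exp (- (c ^ 2) / 2) / c)"
    using sum_bounded_above[of "{1..N}", OF tail] by simp
  finally have "prob {\<omega> \<in> space M. Max ((\<lambda>i. X i \<omega>) ` {1..N}) \<ge> real N powr (- \<alpha> + \<epsilon>)}
      \<le> min 1 (real N * (exp (- (c ^ 2) / 2) / c))"
    using prob_le_1 by simp
  also have "\<dots> \<le> inverse (\<epsilon> - \<delta>) * real N powr (- \<delta>)"
    unfolding c_def using assms(2-6) by (intro min_one_union_gaussian_tail_le) auto
  finally show ?thesis .
qed

end
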